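(* Fix $w,z\in S_n$ and let $\mathcal{L}=\{x\in C_z^\vee:\kappa(x)\ge\kappa(w)\}$. Suppose $\mathcal{L}$ has a maximum element $y_M$ and a minimum element $y_m$ in the inversion table order, and let $J=\{1\le j\le n:\iota_j(y_M)=\iota_j(y_m)+1\}$. If $x\in S_n$ satisfies $\iota(x)=\iota(y_M)-e_j$ for some $j\in J$ (where $e_j$ is the $j$th standard basis vector), then $x\in\mathcal{L}$.
   Context: Permutations are in one-line notation. For $x\in S_n$: inversion table $\iota_k(x)=\#\{i<x^{-1}(k):x(i)>k\}$; code $\kappa_k(x)=\#\{i<x(k):x^{-1}(i)>k\}$. A permutation is determined by its inversion table. Vectors are compared componentwise; the inversion table order on $S_n$ is $x\le y$ iff $\iota(x)\le\iota(y)$. For $z\in S_n$, $C_z^\vee$ is the Boolean sublattice of the inversion table order generated by the elements covered by $z$, namely the set of $x\in S_n$ with $\iota_k(z)-1\le\iota_k(x)\le\iota_k(z)$ for all $k$. *)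

theory Defs
  imports "HOL-Combinatorics.Permutations"
begin

text \<open>Permutations of S_n are functions nat => nat permuting {1..n} (identity elsewhere),
in one-line notation x(1),...,x(n). The inverse is inv x.\<close>

definition inv_table :: "nat \<Rightarrow> (nat \<Rightarrow> nat) \<Rightarrow> nat \<Rightarrow> nat" where
  "inv_table n x k = card {i \<in> {1..n}. i < inv x k \<and> x i > k}"

definition code_vec :: "nat \<Rightarrow> (nat \<Rightarrow> nat) \<Rightarrow> nat \<Rightarrow> nat" where
  "code_vec n x k = card {i \<in> {1..n}. i < x k \<and> inv x i > k}"

definition it_le :: "nat \<Rightarrow> (nat \<Rightarrow> nat) \<Rightarrow> (nat \<Rightarrow> nat) \<Rightarrow> bool" where
  "it_le n x y \<longleftrightarrow> (\<forall>k\<in>{1..n}. inv_table n x k \<le> inv_table n y k)"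

definition Cvee :: "nat \<Rightarrow> (nat \<Rightarrow> nat) \<Rightarrow> (nat \<Rightarrow> nat) set" where
  "Cvee n z = {x. x permutes {1..n} \<and>
     (\<forall>k\<in>{1..n}. int (inv_table n z k) - 1 \<le> int (inv_table n x k)
                 \<and> inv_table n x k \<le> inv_table n z k)}"

end

theory Submission
  imports Defs
begin

text \<open>Work with position functions \<open>P = p\<inverse>\<close>, \<open>Q = q\<inverse>\<close> and suppose
  \<open>\<iota>(q) \<le> \<iota>(p) \<le> \<iota>(q) + 1\<close> with equality at \<open>j\<close>. A downward induction over the values below \<open>j\<close>
  shows that each of them placed before \<open>j\<close> by \<open>p\<close> is placed before \<open>j\<close> by \<open>q\<close> as well. Let \<open>D\<close>
  be the values below \<open>j\<close> that \<open>q\<close> places before \<open>j\<close> and \<open>p\<close> after it; then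
  \<open>q\<inverse>(j) = p\<inverse>(j) + |D|\<close>. Two more downward inductions show that \<open>q\<close> puts \<open>D\<close> after every
  larger value preceding \<open>j\<close>, and \<open>p\<close> puts \<open>D\<close> before every larger value following \<open>j\<close>. Counting
  positions then gives \<open>\<kappa>(q) \<le> \<kappa>(p)\<close> at the position of \<open>j\<close> in \<open>p\<close>, and \<open>\<kappa>(p) \<le> \<kappa>(q)\<close> at
  the position of \<open>j\<close> in \<open>q\<close>.

  In the theorem \<open>x\<close> agrees with \<open>y\<^sub>m\<close> at \<open>j\<close> and with \<open>y\<^sub>M\<close> elsewhere, and all three lie in the
  box \<open>C\<^sub>z\<^sup>\<or>\<close>, so both pairs \<open>(x, y\<^sub>m)\<close> and \<open>(y\<^sub>M, x)\<close> satisfy the hypothesis above: the first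
  handles the position of \<open>j\<close> in \<open>x\<close>, the second every other position.\<close>

lemma card_filter_bij_betw:
  assumes "bij_betw F A A"
  shows "card {a \<in> A. R (F a)} = card {a \<in> A. R a}"
proof -
  have image: "F ` {a \<in> A. R (F a)} = {a \<in> A. R a}"
    using assms by (force simp: bij_betw_def)
  have "bij_betw F {a \<in> A. R (F a)} {a \<in> A. R a}"
    by (rule bij_betw_subset[OF assms _ image]) auto
  then show ?thesis by (rule bij_betw_same_card)
qed

lemma card_le_values_greaterThanLessThan:
  assumes "bij_betw F {1..n} {1..n}" "A \<subseteq> {u \<in> {1..n}. a < F u \<and> F u < b}"
  shows "card A \<le> b - Suc a"
proof -
  have "card A \<le> card {u \<in> {1..n}. a < F u \<and> F u < b}"
    using assms(2) by (rule card_mono[rotated]) simp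
  also have "\<dots> = card {p \<in> {1..n}. a < p \<and> p < b}"
    using card_filter_bij_betw[OF assms(1)] .
  also have "\<dots> \<le> card {a<..<b}" by (intro card_mono) auto
  finally show ?thesis by simp
qed

lemma card_values_greaterThanAtMost:
  assumes "bij_betw F {1..n} {1..n}" "b \<le> n"
  shows "card {u \<in> {1..n}. a < F u \<and> F u \<le> b} = b - a"
proof -
  have "card {u \<in> {1..n}. a < F u \<and> F u \<le> b} = card {p \<in> {1..n}. a < p \<and> p \<le> b}"
    using card_filter_bij_betw[OF assms(1)] .
  also have "{p \<in> {1..n}. a < p \<and> p \<le> b} = {a<..b}" using assms(2) by auto
  finally show ?thesis by simp
qed

lemma card_values_lessThan:
  assumes "bij_betw F {1..n} {1..n}" "v \<in> {1..n}"
  shows "card {u \<in> {1..n}. F u < F v} = F v - 1"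
proof -
  have "card {u \<in> {1..n}. F u < F v} = card {p \<in> {1..n}. p < F v}"
    using card_filter_bij_betw[OF assms(1)] .
  also have "{p \<in> {1..n}. p < F v} = {1..<F v}"
    using bij_betwE[OF assms(1)] assms(2) by fastforce
  finally show ?thesis by simp
qed

text \<open>Here \<open>F\<close> stands for the position function \<open>inv y\<close> of a permutation \<open>y\<close>: \<open>F u\<close> is the
  position of the value \<open>u\<close>.\<close>

definition larger_before :: "nat \<Rightarrow> (nat \<Rightarrow> nat) \<Rightarrow> nat \<Rightarrow> nat \<Rightarrow> nat set" where
  "larger_before n F a t = {u \<in> {1..n}. t < u \<and> F u < F a}"

definition smaller_before :: "nat \<Rightarrow> (nat \<Rightarrow> nat) \<Rightarrow> nat \<Rightarrow> nat set" where
  "smaller_before n F a = {u \<in> {1..n}. u < a \<and> F u < F a}"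

definition smaller_after :: "nat \<Rightarrow> (nat \<Rightarrow> nat) \<Rightarrow> nat \<Rightarrow> nat set" where
  "smaller_after n F a = {u \<in> {1..n}. u < a \<and> F a < F u}"

lemma finite_larger_before [simp]: "finite (larger_before n F a t)"
  by (simp add: larger_before_def)

lemma finite_smaller_before [simp]: "finite (smaller_before n F a)"
  by (simp add: smaller_before_def)

lemma finite_smaller_after [simp]: "finite (smaller_after n F a)"
  by (simp add: smaller_after_def)

lemma inv_table_eq_card_larger_before:
  assumes "y permutes {1..n}"
  shows "inv_table n y k = card (larger_before n (inv y) k k)"
proof -
  have "inv_table n y k = card {i \<in> {1..n}. k < y i \<and> inv y (y i) < inv y k}"
    using permutes_inverses(2)[OF assms] by (simp add: inv_table_def conj_commute)
  also have "\<dots> = card (larger_before n (inv y) k k)"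
    unfolding larger_before_def by (rule card_filter_bij_betw[OF permutes_imp_bij[OF assms]])
  finally show ?thesis .
qed

lemma code_vec_inv_eq_card_smaller_after:
  assumes "y permutes {1..n}"
  shows "code_vec n y (inv y a) = card (smaller_after n (inv y) a)"
  using permutes_inverses(1)[OF assms] by (simp add: code_vec_def smaller_after_def)

lemma position_eq_Suc_card_larger_before:
  assumes "bij_betw F {1..n} {1..n}" "a \<in> {1..n}"
  shows "F a = Suc (card (larger_before n F a 0))"
proof -
  have "larger_before n F a 0 = {u \<in> {1..n}. F u < F a}"
    by (auto simp: larger_before_def)
  moreover have "F a \<ge> 1" using bij_betwE[OF assms(1)] assms(2) by auto
  ultimately show ?thesis using card_values_lessThan[OF assms] by simp
qed

lemma card_smaller_after_add_card_smaller_before: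
  assumes "bij_betw F {1..n} {1..n}" "a \<in> {1..n}"
  shows "card (smaller_after n F a) + card (smaller_before n F a) = a - 1"
proof -
  have "F u \<noteq> F a" if "u \<in> {1..n}" "u \<noteq> a" for u
    using that assms bij_betw_imp_inj_on[OF assms(1)] by (auto simp: inj_on_eq_iff)
  then have "smaller_after n F a \<union> smaller_before n F a = {1..<a}"
    using assms(2) by (force simp: smaller_after_def smaller_before_def)
  moreover have "smaller_after n F a \<inter> smaller_before n F a = {}"
    by (auto simp: smaller_after_def smaller_before_def)
  ultimately show ?thesis
    by (metis card_Un_disjoint card_atLeastLessThan finite_smaller_after finite_smaller_before)
qed

lemma card_larger_before_split:
  assumes "t \<le> a"
  shows "card (larger_before n F a t)
    = card (larger_before n F a a) + card {u \<in> smaller_before n F a. t < u}"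
proof -
  have "larger_before n F a t = larger_before n F a a \<union> {u \<in> smaller_before n F a. t < u}"
    using assms by (auto simp: larger_before_def smaller_before_def) (metis less_irrefl nat_neq_iff)
  moreover have "larger_before n F a a \<inter> {u \<in> smaller_before n F a. t < u} = {}"
    by (auto simp: larger_before_def smaller_before_def)
  ultimately show ?thesis by (simp add: card_Un_disjoint)
qed

lemma card_larger_before_mono:
  "F a \<le> F b \<Longrightarrow> card (larger_before n F a t) \<le> card (larger_before n F b t)"
  by (rule card_mono) (auto simp: larger_before_def)

lemma card_larger_before_strict_mono:
  assumes "a \<in> {1..n}" "t < a" "F a < F b"
  shows "card (larger_before n F a t) < card (larger_before n F b t)"
proof -
  have "insert a (larger_before n F a t) \<subseteq> larger_before n F b t"
    using assms by (auto simp: larger_before_def)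
  moreover have "a \<notin> larger_before n F a t" by (simp add: larger_before_def)
  ultimately show ?thesis
    by (metis card_insert_disjoint card_mono finite_larger_before Suc_le_eq)
qed

locale inversion_sandwich =
  fixes n :: nat and P Q :: "nat \<Rightarrow> nat" and j :: nat
  assumes bij_P: "bij_betw P {1..n} {1..n}" and bij_Q: "bij_betw Q {1..n} {1..n}"
    and table_le: "\<And>t. t \<in> {1..n} \<Longrightarrow> card (larger_before n Q t t) \<le> card (larger_before n P t t)"
    and table_le_Suc:
      "\<And>t. t \<in> {1..n} \<Longrightarrow> card (larger_before n P t t) \<le> card (larger_before n Q t t) + 1"
    and j_in: "j \<in> {1..n}"
    and table_eq_at_j: "card (larger_before n Q j j) = card (larger_before n P j j)"
begin

lemma P_eq_iff: "u \<in> {1..n} \<Longrightarrow> v \<in> {1..n} \<Longrightarrow> P u = P v \<longleftrightarrow> u = v"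
  using bij_betw_imp_inj_on[OF bij_P] by (auto simp: inj_on_eq_iff)

lemma Q_eq_iff: "u \<in> {1..n} \<Longrightarrow> v \<in> {1..n} \<Longrightarrow> Q u = Q v \<longleftrightarrow> u = v"
  using bij_betw_imp_inj_on[OF bij_Q] by (auto simp: inj_on_eq_iff)

lemma smaller_before_subset: "smaller_before n P j \<subseteq> smaller_before n Q j"
proof
  fix i assume "i \<in> smaller_before n P j"
  then show "i \<in> smaller_before n Q j"
  proof (induction "j - i" arbitrary: i rule: less_induct)
    case less
    then have i: "i \<in> {1..n}" "i < j" "P i < P j" by (auto simp: smaller_before_def)
    have IH: "{u \<in> smaller_before n P j. i < u} \<subseteq> {u \<in> smaller_before n Q j. i < u}"
    proof safe
      fix u assume "u \<in> smaller_before n P j" "i < u"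
      moreover from this have "j - u < j - i" by (simp add: smaller_before_def diff_less_mono2)
      ultimately show "u \<in> smaller_before n Q j" using less.hyps by blast
    qed
    show ?case
    proof (rule ccontr)
      assume "i \<notin> smaller_before n Q j"
      then have "Q j < Q i"
        using i j_in Q_eq_iff[of i j] by (auto simp: smaller_before_def)
      have "card (larger_before n P i i) \<le> card (larger_before n P j i)"
        using i by (simp add: card_larger_before_mono)
      also have "\<dots> = card (larger_before n P j j) + card {u \<in> smaller_before n P j. i < u}"
        using i(2) by (intro card_larger_before_split less_imp_le)
      also have "\<dots> \<le> card (larger_before n Q j j) + card {u \<in> smaller_before n Q j. i < u}"
        using table_eq_at_j card_mono[OF _ IH] by simp
      also have "\<dots> = card (larger_before n Q j i)"
        using i(2) by (intro card_larger_before_split[symmetric] less_imp_le)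
      also have "\<dots> < card (larger_before n Q i i)"
        using j_in i \<open>Q j < Q i\<close> by (simp add: card_larger_before_strict_mono)
      finally show False using table_le[OF i(1)] by simp
    qed
  qed
qed

definition crossed :: "nat set" where
  "crossed = smaller_before n Q j - smaller_before n P j"

lemma crossed_iff: "u \<in> crossed \<longleftrightarrow> u \<in> {1..n} \<and> u < j \<and> Q u < Q j \<and> P j < P u"
  using j_in P_eq_iff[of u j] by (auto simp: crossed_def smaller_before_def)

lemma finite_crossed [simp]: "finite crossed"
  by (simp add: crossed_def)

lemma card_crossed: "card crossed = card (smaller_before n Q j) - card (smaller_before n P j)"
  by (simp add: crossed_def card_Diff_subset smaller_before_subset)

lemma card_larger_before_Q_eq:
  assumes "t \<le> j"
  shows "card (larger_before n Q j t) = card (larger_before n P j t) + card {u \<in> crossed. t < u}"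
proof -
  have "{u \<in> smaller_before n Q j. t < u}
      = {u \<in> smaller_before n P j. t < u} \<union> {u \<in> crossed. t < u}"
    using smaller_before_subset by (auto simp: crossed_def)
  moreover have "{u \<in> smaller_before n P j. t < u} \<inter> {u \<in> crossed. t < u} = {}"
    by (auto simp: crossed_def)
  ultimately have "card {u \<in> smaller_before n Q j. t < u}
      = card {u \<in> smaller_before n P j. t < u} + card {u \<in> crossed. t < u}"
    by (simp add: card_Un_disjoint)
  then show ?thesis
    using table_eq_at_j card_larger_before_split[OF assms, of n P] card_larger_before_split[OF assms, of n Q]
    by simp
qed

lemma Q_j_eq: "Q j = P j + card crossed"
proof -
  have "{u \<in> crossed. 0 < u} = crossed" by (auto simp: crossed_iff)
  then show ?thesis
    using card_larger_before_Q_eq[of 0] position_eq_Suc_card_larger_before[OF bij_P j_in]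
      position_eq_Suc_card_larger_before[OF bij_Q j_in] by simp
qed

lemma card_smaller_after_P_eq: "card (smaller_after n P j) = card (smaller_after n Q j) + card crossed"
  using card_smaller_after_add_card_smaller_before[OF bij_P j_in]
    card_smaller_after_add_card_smaller_before[OF bij_Q j_in]
    card_crossed card_mono[OF finite_smaller_before smaller_before_subset]
  by linarith

lemma Q_larger_before_crossed:
  assumes w: "w \<in> larger_before n Q j j" and "u \<in> crossed"
  shows "Q w < Q u"
  using \<open>u \<in> crossed\<close>
proof (induction "j - u" arbitrary: u rule: less_induct)
  case less
  then have u: "u \<in> {1..n}" "u < j" "Q u < Q j" "P j < P u" by (simp_all add: crossed_iff)
  have w': "w \<in> {1..n}" "j < w" "Q w < Q j" using w by (auto simp: larger_before_def)
  show ?case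
  proof (rule ccontr)
    assume "\<not> Q w < Q u"
    then have "Q u < Q w" using u w' Q_eq_iff[of w u] by auto
    have later: "Q w < Q v" if "v \<in> crossed" "u < v" for v
    proof -
      have "j - v < j - u" using that by (simp add: crossed_iff diff_less_mono2)
      then show ?thesis using less.hyps \<open>v \<in> crossed\<close> by blast
    qed
    have "larger_before n Q u u \<inter> insert w {v \<in> crossed. u < v} = {}"
      using \<open>Q u < Q w\<close> by (auto simp: larger_before_def dest!: later)
    then have "card (larger_before n Q u u) + Suc (card {v \<in> crossed. u < v})
        = card (larger_before n Q u u \<union> insert w {v \<in> crossed. u < v})"
      using w' by (simp add: card_Un_disjoint crossed_iff)
    also have "\<dots> \<le> card (larger_before n Q j u)"
      using u w' by (intro card_mono) (auto simp: larger_before_def crossed_iff)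
    also have "\<dots> = card (larger_before n P j u) + card {v \<in> crossed. u < v}"
      using u by (simp add: card_larger_before_Q_eq)
    finally have "Suc (card (larger_before n Q u u)) \<le> card (larger_before n P j u)" by simp
    also have "\<dots> < card (larger_before n P u u)"
      using j_in u by (simp add: card_larger_before_strict_mono)
    finally show False using table_le_Suc[OF u(1)] by simp
  qed
qed

lemma P_crossed_before_larger:
  assumes w: "w \<in> {1..n}" "j < w" "P j < P w" and "u \<in> crossed"
  shows "P u < P w"
  using \<open>u \<in> crossed\<close>
proof (induction "j - u" arbitrary: u rule: less_induct)
  case less
  then have u: "u \<in> {1..n}" "u < j" "Q u < Q j" "P j < P u" by (simp_all add: crossed_iff)
  show ?case
  proof (rule ccontr)
    assume "\<not> P u < P w"
    then have "P w < P u" using u w P_eq_iff[of w u] by auto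
    have earlier: "P v < P w" if "v \<in> crossed" "u < v" for v
    proof -
      have "j - v < j - u" using that by (simp add: crossed_iff diff_less_mono2)
      then show ?thesis using less.hyps \<open>v \<in> crossed\<close> by blast
    qed
    have "larger_before n P j u \<inter> {v \<in> crossed. u < v} = {}"
      by (auto simp: larger_before_def crossed_iff)
    then have "Suc (Suc (card (larger_before n P j u) + card {v \<in> crossed. u < v}))
        = card (insert j (insert w (larger_before n P j u \<union> {v \<in> crossed. u < v})))"
      using w by (simp add: card_Un_disjoint larger_before_def crossed_iff)
    also have "\<dots> \<le> card (larger_before n P u u)"
      using u w j_in \<open>P w < P u\<close>
      by (intro card_mono) (auto simp: larger_before_def dest: earlier, auto simp: crossed_iff)
    finally have "Suc (Suc (card (larger_before n Q j u))) \<le> card (larger_before n P u u)"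
      using u by (simp add: card_larger_before_Q_eq)
    moreover have "card (larger_before n Q u u) \<le> card (larger_before n Q j u)"
      using u by (simp add: card_larger_before_mono)
    ultimately show False using table_le_Suc[OF u(1)] by simp
  qed
qed

lemma card_smaller_after_Q_le:
  assumes v: "v \<in> {1..n}" "Q v = P j"
  shows "card (smaller_after n Q v) \<le> card (smaller_after n P j)"
proof -
  have "v \<le> j"
  proof (rule ccontr)
    assume "\<not> v \<le> j"
    then have "Q v < Q j" using v j_in Q_eq_iff[of v j] Q_j_eq by auto
    with \<open>\<not> v \<le> j\<close> have "v \<in> larger_before n Q j j" using v by (simp add: larger_before_def)
    then have "crossed \<subseteq> {u \<in> {1..n}. Q v < Q u \<and> Q u < Q j}"
      using Q_larger_before_crossed by (auto simp: crossed_iff)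
    then have "card crossed \<le> Q j - Suc (Q v)" by (rule card_le_values_greaterThanLessThan[OF bij_Q])
    then show False using v \<open>Q v < Q j\<close> Q_j_eq by simp
  qed
  have "smaller_after n Q v \<subseteq> smaller_after n Q j \<union> {u \<in> {1..n}. P j < Q u \<and> Q u < Q j}"
  proof
    fix i assume "i \<in> smaller_after n Q v"
    then have i: "i \<in> {1..n}" "i < j" "P j < Q i" using v \<open>v \<le> j\<close> by (auto simp: smaller_after_def)
    then have "Q i \<noteq> Q j" using Q_eq_iff[of i j] j_in by auto
    then show "i \<in> smaller_after n Q j \<union> {u \<in> {1..n}. P j < Q u \<and> Q u < Q j}"
      using i by (auto simp: smaller_after_def)
  qed
  then have "card (smaller_after n Q v)
      \<le> card (smaller_after n Q j \<union> {u \<in> {1..n}. P j < Q u \<and> Q u < Q j})"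
    by (rule card_mono[rotated]) simp
  also have "\<dots> \<le> card (smaller_after n Q j) + card {u \<in> {1..n}. P j < Q u \<and> Q u < Q j}"
    by (rule card_Un_le)
  also have "\<dots> \<le> card (smaller_after n Q j) + card crossed"
    using card_le_values_greaterThanLessThan[OF bij_Q order_refl, of "P j" "Q j"] Q_j_eq by simp
  finally show ?thesis by (simp add: card_smaller_after_P_eq)
qed

lemma card_smaller_after_P_le:
  assumes v: "v \<in> {1..n}" "P v = Q j"
  shows "card (smaller_after n P v) \<le> card (smaller_after n Q j)"
proof -
  define M where "M = {u \<in> {1..n}. P j < P u \<and> P u \<le> Q j}"
  have "Q j \<le> n" using bij_betwE[OF bij_Q] j_in by auto
  then have "card M = card crossed"
    using card_values_greaterThanAtMost[OF bij_P, of "Q j" "P j"] Q_j_eq by (simp add: M_def)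
  have M_subset: "M \<subseteq> smaller_after n P j"
  proof
    fix u assume "u \<in> M"
    then have u: "u \<in> {1..n}" "P j < P u" "P u \<le> Q j" by (auto simp: M_def)
    have "\<not> j < u"
    proof
      assume "j < u"
      then have "crossed \<subseteq> {u' \<in> {1..n}. P j < P u' \<and> P u' < P u}"
        using P_crossed_before_larger[OF u(1) _ u(2)] by (auto simp: crossed_iff)
      then have "card crossed \<le> P u - Suc (P j)" by (rule card_le_values_greaterThanLessThan[OF bij_P])
      then show False using u Q_j_eq by simp
    qed
    moreover have "u \<noteq> j" using u by auto
    ultimately show "u \<in> smaller_after n P j" using u by (simp add: smaller_after_def)
  qed
  have "v \<le> j"
  proof (cases "v = j")
    case False
    then have "v \<in> M" using v j_in P_eq_iff[of v j] Q_j_eq by (auto simp: M_def)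
    then show ?thesis using M_subset by (auto simp: smaller_after_def)
  qed simp
  then have "smaller_after n P v \<subseteq> smaller_after n P j - M"
    using v Q_j_eq by (auto simp: smaller_after_def M_def)
  then have "card (smaller_after n P v) \<le> card (smaller_after n P j - M)"
    by (rule card_mono[rotated]) simp
  also have "\<dots> = card (smaller_after n P j) - card M"
    using M_subset by (simp add: card_Diff_subset finite_subset)
  finally show ?thesis using \<open>card M = card crossed\<close> by (simp add: card_smaller_after_P_eq)
qed

end

lemma code_vec_le_at_position_of:
  assumes p: "p permutes {1..n}" and q: "q permutes {1..n}"
    and le: "\<And>k. k \<in> {1..n} \<Longrightarrow> inv_table n q k \<le> inv_table n p k"
    and le_Suc: "\<And>k. k \<in> {1..n} \<Longrightarrow> inv_table n p k \<le> inv_table n q k + 1"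
    and j: "j \<in> {1..n}" "inv_table n q j = inv_table n p j"
  shows "code_vec n q (inv p j) \<le> code_vec n p (inv p j)"
    and "code_vec n p (inv q j) \<le> code_vec n q (inv q j)"
proof -
  interpret inversion_sandwich n "inv p" "inv q" j
    using le le_Suc j permutes_imp_bij[OF permutes_inv[OF p]] permutes_imp_bij[OF permutes_inv[OF q]]
    by unfold_locales (simp_all add: inv_table_eq_card_larger_before[OF p]
        inv_table_eq_card_larger_before[OF q])
  have inv_inv: "inv q (q (inv p j)) = inv p j" "inv p (p (inv q j)) = inv q j"
    by (simp_all add: permutes_inverses(2)[OF p] permutes_inverses(2)[OF q])
  have "q (inv p j) \<in> {1..n}" "p (inv q j) \<in> {1..n}"
    using j(1) by (simp_all only: permutes_in_image[OF p] permutes_in_image[OF q]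
        permutes_in_image[OF permutes_inv[OF p]] permutes_in_image[OF permutes_inv[OF q]])
  then show "code_vec n q (inv p j) \<le> code_vec n p (inv p j)"
    and "code_vec n p (inv q j) \<le> code_vec n q (inv q j)"
    using card_smaller_after_Q_le[of "q (inv p j)"] card_smaller_after_P_le[of "p (inv q j)"]
      code_vec_inv_eq_card_smaller_after[OF p, of j] code_vec_inv_eq_card_smaller_after[OF q, of j]
      code_vec_inv_eq_card_smaller_after[OF q, of "q (inv p j)"]
      code_vec_inv_eq_card_smaller_after[OF p, of "p (inv q j)"]
    by (simp_all add: inv_inv)
qed

lemma inv_table_le_Suc_if_Cvee:
  assumes "p \<in> Cvee n z" "q \<in> Cvee n z" "k \<in> {1..n}"
  shows "inv_table n p k \<le> inv_table n q k + 1"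
proof -
  have "inv_table n p k \<le> inv_table n z k" "int (inv_table n z k) - 1 \<le> int (inv_table n q k)"
    using assms by (simp_all add: Cvee_def)
  then show ?thesis by linarith
qed

lemma Cvee_between:
  assumes "a \<in> Cvee n z" "b \<in> Cvee n z" "x permutes {1..n}"
    and "\<And>k. k \<in> {1..n} \<Longrightarrow> inv_table n a k \<le> inv_table n x k"
    and "\<And>k. k \<in> {1..n} \<Longrightarrow> inv_table n x k \<le> inv_table n b k"
  shows "x \<in> Cvee n z"
  using assms unfolding Cvee_def by (smt (verit) mem_Collect_eq of_nat_mono order.trans)

lemma code_vec_ge_min_if_agrees:
  assumes x: "x permutes {1..n}" and Cvee: "x \<in> Cvee n z" "ym \<in> Cvee n z" "yM \<in> Cvee n z"
    and ym_le_x: "\<And>k. k \<in> {1..n} \<Longrightarrow> inv_table n ym k \<le> inv_table n x k"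
    and x_le_yM: "\<And>k. k \<in> {1..n} \<Longrightarrow> inv_table n x k \<le> inv_table n yM k"
    and j: "j \<in> {1..n}" "inv_table n x j = inv_table n ym j"
    and x_eq_yM: "\<And>k. k \<in> {1..n} \<Longrightarrow> k \<noteq> j \<Longrightarrow> inv_table n x k = inv_table n yM k"
    and k: "k \<in> {1..n}"
  shows "min (code_vec n ym k) (code_vec n yM k) \<le> code_vec n x k"
proof -
  have perms: "ym permutes {1..n}" "yM permutes {1..n}"
    using Cvee by (simp_all add: Cvee_def)
  have x_k: "x k \<in> {1..n}" "inv x (x k) = k"
    using k by (simp_all only: permutes_in_image[OF x] permutes_inverses(2)[OF x])
  show ?thesis
  proof (cases "x k = j")
    case True
    then show ?thesis
      using code_vec_le_at_position_of(1)[OF x perms(1) ym_le_x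
          inv_table_le_Suc_if_Cvee[OF Cvee(1,2)] j(1) j(2)[symmetric]] x_k by simp
  next
    case False
    then show ?thesis
      using code_vec_le_at_position_of(2)[OF perms(2) x x_le_yM
          inv_table_le_Suc_if_Cvee[OF Cvee(3,1)] x_k(1) x_eq_yM[OF x_k(1) False]] x_k by simp
  qed
qed

theorem lemma5p3:
  fixes n :: nat and w z yM ym x :: "nat \<Rightarrow> nat" and j :: nat
    and L :: "(nat \<Rightarrow> nat) set"
  assumes w: "w permutes {1..n}" and z: "z permutes {1..n}"
    and L_def: "L = {y \<in> Cvee n z. \<forall>k\<in>{1..n}. code_vec n y k \<ge> code_vec n w k}"
    and yM: "yM \<in> L" "\<forall>y\<in>L. it_le n y yM"
    and ym: "ym \<in> L" "\<forall>y\<in>L. it_le n ym y"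
    and x: "x permutes {1..n}"
    and j: "j \<in> {j \<in> {1..n}. inv_table n yM j = inv_table n ym j + 1}"
    and xt: "\<forall>k\<in>{1..n}. int (inv_table n x k) = int (inv_table n yM k) - (if k = j then 1 else 0)"
  shows "x \<in> L"
proof -
  have Cvee: "ym \<in> Cvee n z" "yM \<in> Cvee n z"
    using yM(1) ym(1) by (simp_all add: L_def)
  have j_in: "j \<in> {1..n}" and x_eq_ym: "inv_table n x j = inv_table n ym j"
    using j xt[rule_format, of j] by auto
  have x_eq_yM: "inv_table n x k = inv_table n yM k" if "k \<in> {1..n}" "k \<noteq> j" for k
    using xt[rule_format, OF that(1)] that(2) by simp
  have x_le_yM: "inv_table n x k \<le> inv_table n yM k" if "k \<in> {1..n}" for k
    using xt[rule_format, OF that] by (simp split: if_splits)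
  have ym_le_x: "inv_table n ym k \<le> inv_table n x k" if "k \<in> {1..n}" for k
    using ym(2) yM(1) that x_eq_yM[OF that] x_eq_ym by (cases "k = j") (auto simp: it_le_def)
  have x_Cvee: "x \<in> Cvee n z"
    using Cvee x ym_le_x x_le_yM by (rule Cvee_between)
  have "min (code_vec n ym k) (code_vec n yM k) \<le> code_vec n x k" if "k \<in> {1..n}" for k
    using code_vec_ge_min_if_agrees[OF x x_Cvee Cvee ym_le_x x_le_yM j_in x_eq_ym x_eq_yM that] .
  moreover have "code_vec n w k \<le> min (code_vec n ym k) (code_vec n yM k)" if "k \<in> {1..n}" for k
    using ym(1) yM(1) that by (simp add: L_def)
  ultimately have "\<forall>k\<in>{1..n}. code_vec n w k \<le> code_vec n x k"
    using order_trans by blast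
  then show ?thesis using x_Cvee by (simp add: L_def)
qed

end
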